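(* Assume (F1) and (F2). Then there exists a constant $\bar\Delta_2\in(0,1]$ such that for any $\Delta_2\in(0,\bar\Delta_2)$, $y,z\in\mathbb{R}^{n_2}$, $x\in\mathbb{R}^{n_1}$ and integers $n\ge0$, $m\ge0$, $$\mathbb{E}|Y^{x,y}_{n,m}-Y^{x,z}_{n,m}|^2\le|y-z|^2e^{-\beta m\Delta_2/2}.$$
   Context: $|\cdot|$ Euclidean/trace (Frobenius) norm. Continuous $f:\mathbb{R}^{n_1}\times\mathbb{R}^{n_2}\to\mathbb{R}^{n_2}$, $g:\mathbb{R}^{n_1}\times\mathbb{R}^{n_2}\to\mathbb{R}^{n_2\times d_2}$ with (F1) $|f(x_1,y_1)-f(x_2,y_2)|\vee|g(x_1,y_1)-g(x_2,y_2)|\le L(|x_1-x_2|+|y_1-y_2|)$ for some $L>0$; (F2) $2(y_1-y_2)^T(f(x,y_1)-f(x,y_2))+|g(x,y_1)-g(x,y_2)|^2\le-\beta|y_1-y_2|^2$ for some $\beta>0$ (this $\beta$ appears in the claim). $\{W^2_n\}_{n\ge0}$ are mutually independent $d_2$-dimensional Brownian motions. For $x\in\mathbb{R}^{n_1}$, initial value $y\in\mathbb{R}^{n_2}$, $n\ge0$: $Y^{x,y}_{n,0}=y$, $Y^{x,y}_{n,m+1}=Y^{x,y}_{n,m}+f(x,Y^{x,y}_{n,m})\Delta_2+g(x,Y^{x,y}_{n,m})(W^2_n((m+1)\Delta_2)-W^2_n(m\Delta_2))$ (the chains with initial values $y$ and $z$ use the same $W^2_n$). *)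

theory Defs
  imports "HOL-Probability.Probability"
begin

definition brownian_motion :: "'a measure \<Rightarrow> (real \<Rightarrow> 'a \<Rightarrow> real ^ 'd) \<Rightarrow> bool" where
  "brownian_motion M W \<longleftrightarrow>
     prob_space M \<and>
     (\<forall>t\<ge>0. W t \<in> borel_measurable M) \<and>
     (AE \<omega> in M. W 0 \<omega> = 0) \<and>
     (AE \<omega> in M. continuous_on {0..} (\<lambda>t. W t \<omega>)) \<and>
     (\<forall>s t. 0 \<le> s \<and> s < t \<longrightarrow>
        (\<forall>i. distributed M lborel (\<lambda>\<omega>. (W t \<omega> - W s \<omega>) $ i) (normal_density 0 (sqrt (t - s)))) \<and>
        prob_space.indep_vars M (\<lambda>_. borel) (\<lambda>i \<omega>. (W t \<omega> - W s \<omega>) $ i) UNIV) \<and>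
     (\<forall>(ts :: nat \<Rightarrow> real) k. 0 \<le> ts 0 \<and> (\<forall>j<k. ts j < ts (Suc j)) \<longrightarrow>
        prob_space.indep_vars M (\<lambda>_. borel) (\<lambda>j \<omega>. W (ts (Suc j)) \<omega> - W (ts j) \<omega>) {..<k})"

text \<open>Euler--Maruyama chain Y^{x,y}_{n,m} driven by the Brownian path W (= W^2_n) with step size \<Delta>.\<close>
primrec em_chain ::
  "(real ^ 'n1 \<Rightarrow> real ^ 'n2 \<Rightarrow> real ^ 'n2) \<Rightarrow> (real ^ 'n1 \<Rightarrow> real ^ 'n2 \<Rightarrow> real ^ 'd ^ 'n2) \<Rightarrow> real \<Rightarrow>
   (real \<Rightarrow> 'a \<Rightarrow> real ^ 'd) \<Rightarrow> real ^ 'n1 \<Rightarrow> real ^ 'n2 \<Rightarrow> nat \<Rightarrow> 'a \<Rightarrow> real ^ 'n2" where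
  "em_chain f g \<Delta> W x y 0 \<omega> = y"
| "em_chain f g \<Delta> W x y (Suc m) \<omega> =
     em_chain f g \<Delta> W x y m \<omega> + \<Delta> *\<^sub>R f x (em_chain f g \<Delta> W x y m \<omega>)
     + g x (em_chain f g \<Delta> W x y m \<omega>) *v (W (real (Suc m) * \<Delta>) \<omega> - W (real m * \<Delta>) \<omega>)"

end

theory Submission
  imports Defs
begin

text \<open>Run both chains on the same Brownian path and let \<open>e m\<close> be their difference. Then
  \<open>e (m+1) = e m + \<Delta> (f Y\<^sub>m - f Z\<^sub>m) + (g Y\<^sub>m - g Z\<^sub>m) \<xi>\<^sub>m\<close> with \<open>\<xi>\<^sub>m \<sim> N(0, \<Delta> I)\<close>
  independent of \<open>(Y\<^sub>m, Z\<^sub>m)\<close>. Integrating \<open>\<xi>\<^sub>m\<close> out first gives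
  \<open>E |e (m+1)|\<^sup>2 = E (|e m + \<Delta> (f Y\<^sub>m - f Z\<^sub>m)|\<^sup>2 + \<Delta> |g Y\<^sub>m - g Z\<^sub>m|\<^sup>2)\<close>, and (F2) together
  with the Lipschitz bound on \<open>f\<close> bounds the integrand by
  \<open>(1 - \<beta>\<Delta> + L\<^sup>2\<Delta>\<^sup>2) |e m|\<^sup>2 \<le> exp (-\<beta>\<Delta>/2) |e m|\<^sup>2\<close> as soon as \<open>L\<^sup>2\<Delta> \<le> \<beta>/2\<close>.
  Iterating gives the claim with \<open>\<Delta>bar = min 1 (\<beta> / (2 L\<^sup>2))\<close>.\<close>

definition iid_normal_vector :: "'a measure \<Rightarrow> real \<Rightarrow> ('a \<Rightarrow> real ^ 'd) \<Rightarrow> bool" where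
  "iid_normal_vector M v X \<longleftrightarrow>
     (\<forall>i. distributed M lborel (\<lambda>\<omega>. X \<omega> $ i) (normal_density 0 (sqrt v))) \<and>
     prob_space.indep_vars M (\<lambda>_. borel) (\<lambda>i \<omega>. X \<omega> $ i) UNIV"

lemma (in prob_space) nn_integral_indep_var:
  assumes ind: "indep_var S X T Y" and H: "H \<in> borel_measurable (S \<Otimes>\<^sub>M T)"
  shows "(\<integral>\<^sup>+\<omega>. H (X \<omega>, Y \<omega>) \<partial>M) = (\<integral>\<^sup>+\<omega>. (\<integral>\<^sup>+\<omega>'. H (X \<omega>, Y \<omega>') \<partial>M) \<partial>M)"
proof -
  have X: "random_variable S X" and Y: "random_variable T Y"
    and joint: "distr M S X \<Otimes>\<^sub>M distr M T Y = distr M (S \<Otimes>\<^sub>M T) (\<lambda>\<omega>. (X \<omega>, Y \<omega>))"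
    using ind unfolding indep_var_distribution_eq by auto
  interpret Y: prob_space "distr M T Y"
    using prob_space_distr[OF Y] .
  have "(\<integral>\<^sup>+\<omega>. H (X \<omega>, Y \<omega>) \<partial>M) = (\<integral>\<^sup>+p. H p \<partial>(distr M S X \<Otimes>\<^sub>M distr M T Y))"
    unfolding joint using X Y H by (simp add: nn_integral_distr)
  also have "\<dots> = (\<integral>\<^sup>+u. \<integral>\<^sup>+v. H (u, v) \<partial>distr M T Y \<partial>distr M S X)"
    using H by (simp add: Y.nn_integral_fst)
  also have "\<dots> = (\<integral>\<^sup>+u. \<integral>\<^sup>+\<omega>'. H (u, Y \<omega>') \<partial>M \<partial>distr M S X)"
    using Y H by (intro nn_integral_cong) (simp add: nn_integral_distr space_pair_measure)
  also have "\<dots> = (\<integral>\<^sup>+\<omega>. (\<integral>\<^sup>+\<omega>'. H (X \<omega>, Y \<omega>') \<partial>M) \<partial>M)"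
    using X Y H by (simp add: nn_integral_distr)
  finally show ?thesis .
qed

lemma (in prob_space) iid_normal_vector_moments:
  assumes X: "iid_normal_vector M v X" and v: "0 < v"
  shows "integrable M (\<lambda>\<omega>. X \<omega> $ k)" "expectation (\<lambda>\<omega>. X \<omega> $ k) = 0"
    and "integrable M (\<lambda>\<omega>. X \<omega> $ k * X \<omega> $ l)"
    and "expectation (\<lambda>\<omega>. X \<omega> $ k * X \<omega> $ l) = (if k = l then v else 0)"
proof -
  have D: "distributed M lborel (\<lambda>\<omega>. X \<omega> $ i) (normal_density 0 (sqrt v))" for i
    using X by (simp add: iid_normal_vector_def)
  have ind: "indep_vars (\<lambda>_. borel) (\<lambda>i \<omega>. X \<omega> $ i) UNIV"
    using X by (simp add: iid_normal_vector_def)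
  have sd: "0 < sqrt v" using v by simp
  show int1: "integrable M (\<lambda>\<omega>. X \<omega> $ i)" for i
    using distributed_integrable[OF D[of i], of "\<lambda>x. x"] integrable_normal_moment_nz_1[OF sd, of 0]
    by simp
  show E1: "expectation (\<lambda>\<omega>. X \<omega> $ i) = 0" for i
    using normal_distributed_expectation[OF sd D[of i]] .
  have int_sq: "integrable M (\<lambda>\<omega>. X \<omega> $ k * X \<omega> $ k)"
    using distributed_integrable[OF D[of k], of "\<lambda>x. x^2"] integrable_normal_moment[OF sd, of 0 2]
    by (simp add: power2_eq_square)
  have E_sq: "expectation (\<lambda>\<omega>. X \<omega> $ k * X \<omega> $ k) = v"
    using normal_distributed_variance[OF sd D[of k]] E1[of k] v by (simp add: power2_eq_square)
  have "integrable M (\<lambda>\<omega>. X \<omega> $ k * X \<omega> $ l) \<and> expectation (\<lambda>\<omega>. X \<omega> $ k * X \<omega> $ l) = (if k = l then v else 0)"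
  proof (cases "k = l")
    case True
    then show ?thesis using int_sq E_sq by simp
  next
    case False
    have kl: "indep_vars (\<lambda>_. borel) (\<lambda>i \<omega>. X \<omega> $ i) {k, l}"
      using indep_vars_subset[OF ind] by simp
    have "integrable M (\<lambda>\<omega>. \<Prod>i\<in>{k, l}. X \<omega> $ i)"
      by (rule indep_vars_integrable[OF _ kl]) (simp_all add: int1)
    moreover have "expectation (\<lambda>\<omega>. \<Prod>i\<in>{k, l}. X \<omega> $ i) = (\<Prod>i\<in>{k, l}. expectation (\<lambda>\<omega>. X \<omega> $ i))"
      by (rule indep_vars_lebesgue_integral[OF _ kl]) (simp_all add: int1)
    ultimately show ?thesis using False E1 by simp
  qed
  then show "integrable M (\<lambda>\<omega>. X \<omega> $ k * X \<omega> $ l)"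
    and "expectation (\<lambda>\<omega>. X \<omega> $ k * X \<omega> $ l) = (if k = l then v else 0)"
    by auto
qed

lemma power2_norm_vec: "(norm x)\<^sup>2 = (\<Sum>i\<in>UNIV. (x $ i)\<^sup>2)"
  for x :: "real ^ 'n"
  unfolding power2_norm_eq_inner inner_vec_def by (simp add: power2_eq_square)

lemma power2_norm_matrix: "(norm B)\<^sup>2 = (\<Sum>i\<in>UNIV. \<Sum>k\<in>UNIV. (B $ i $ k)\<^sup>2)"
  for B :: "real ^ 'd ^ 'n"
  unfolding power2_norm_eq_inner inner_vec_def by (simp add: power2_eq_square)

lemma power2_norm_add_matrix_vector_mult:
  fixes a :: "real ^ 'n" and B :: "real ^ 'd ^ 'n"
  shows "(norm (a + B *v w))\<^sup>2 = (\<Sum>i\<in>UNIV. (a $ i)\<^sup>2)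
    + (\<Sum>i\<in>UNIV. \<Sum>k\<in>UNIV. (2 * a $ i * B $ i $ k) * w $ k)
    + (\<Sum>i\<in>UNIV. \<Sum>k\<in>UNIV. \<Sum>l\<in>UNIV. (B $ i $ k * B $ i $ l) * (w $ k * w $ l))"
proof -
  have "(norm (a + B *v w))\<^sup>2 = (\<Sum>i\<in>UNIV. (a $ i + (\<Sum>k\<in>UNIV. B $ i $ k * w $ k))\<^sup>2)"
    by (simp add: power2_norm_vec matrix_vector_mult_def)
  also have "\<dots> = (\<Sum>i\<in>UNIV. (a $ i)\<^sup>2 + (\<Sum>k\<in>UNIV. (2 * a $ i * B $ i $ k) * w $ k)
      + (\<Sum>k\<in>UNIV. \<Sum>l\<in>UNIV. (B $ i $ k * B $ i $ l) * (w $ k * w $ l)))"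
    by (intro sum.cong refl)
      (simp add: power2_eq_square algebra_simps sum_distrib_left sum_product)
  finally show ?thesis by (simp add: sum.distrib)
qed

lemma (in prob_space) nn_integral_power2_norm_affine_iid_normal:
  fixes a :: "real ^ 'n" and B :: "real ^ 'd ^ 'n"
  assumes X: "iid_normal_vector M v X" and v: "0 < v"
  shows "(\<integral>\<^sup>+\<omega>. ennreal ((norm (a + B *v X \<omega>))\<^sup>2) \<partial>M) = ennreal ((norm a)\<^sup>2 + v * (norm B)\<^sup>2)"
proof -
  note moments = iid_normal_vector_moments[OF X v]
  let ?h = "\<lambda>\<omega>. (norm (a + B *v X \<omega>))\<^sup>2"
  have h_integrable: "integrable M ?h"
    unfolding power2_norm_add_matrix_vector_mult
    by (intro Bochner_Integration.integrable_add Bochner_Integration.integrable_sum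
        integrable_mult_right integrable_const moments)
  have "expectation ?h = (\<Sum>i\<in>UNIV. (a $ i)\<^sup>2) + (\<Sum>i\<in>UNIV. \<Sum>k\<in>UNIV. (2 * a $ i * B $ i $ k) * 0)
      + (\<Sum>i\<in>UNIV. \<Sum>k\<in>UNIV. \<Sum>l\<in>UNIV. (B $ i $ k * B $ i $ l) * (if k = l then v else 0))"
    unfolding power2_norm_add_matrix_vector_mult using moments
    by (simp add: integrable_sum integral_sum prob_space del: integral_mult_right_zero)
  also have "\<dots> = (norm a)\<^sup>2 + v * (norm B)\<^sup>2"
    by (simp add: power2_norm_vec power2_norm_matrix if_distrib sum_distrib_left
        mult.commute cong: if_cong) (simp add: power2_eq_square)
  finally have "expectation ?h = (norm a)\<^sup>2 + v * (norm B)\<^sup>2" .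
  with nn_integral_eq_integral[OF h_integrable] show ?thesis
    by simp
qed

definition em_step ::
  "(real ^ 'n \<Rightarrow> real ^ 'n) \<Rightarrow> (real ^ 'n \<Rightarrow> real ^ 'd ^ 'n) \<Rightarrow> real \<Rightarrow> real ^ 'n \<Rightarrow> real ^ 'd \<Rightarrow> real ^ 'n"
  where "em_step F G \<Delta> y w = y + \<Delta> *\<^sub>R F y + G y *v w"

text \<open>Driving the scheme by a deterministic sequence of increments makes the state after \<open>m\<close>
  steps a measurable function of \<open>w 0, \<dots>, w (m - 1)\<close> alone.\<close>

primrec em_scheme ::
  "(real ^ 'n \<Rightarrow> real ^ 'n) \<Rightarrow> (real ^ 'n \<Rightarrow> real ^ 'd ^ 'n) \<Rightarrow> real \<Rightarrow> real ^ 'n \<Rightarrow>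
   (nat \<Rightarrow> real ^ 'd) \<Rightarrow> nat \<Rightarrow> real ^ 'n" where
  "em_scheme F G \<Delta> y w 0 = y"
| "em_scheme F G \<Delta> y w (Suc m) = em_step F G \<Delta> (em_scheme F G \<Delta> y w m) (w m)"

lemma em_chain_eq_em_scheme:
  "em_chain f g \<Delta> W x y m \<omega> =
     em_scheme (f x) (g x) \<Delta> y (\<lambda>j. W (real (Suc j) * \<Delta>) \<omega> - W (real j * \<Delta>) \<omega>) m"
  by (induction m) (simp_all add: em_step_def)

lemma em_scheme_restrict: "m \<le> k \<Longrightarrow> em_scheme F G \<Delta> y (restrict w {..<k}) m = em_scheme F G \<Delta> y w m"
  by (induction m) auto

lemma em_step_diff:
  "em_step F G \<Delta> y w - em_step F G \<Delta> z w = (y - z + \<Delta> *\<^sub>R (F y - F z)) + (G y - G z) *v w"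
  by (simp add: em_step_def algebra_simps matrix_vector_mult_diff_rdistrib scaleR_diff_right)

lemma continuous_on_matrix_vector_mult [continuous_intros]:
  fixes G :: "'a::topological_space \<Rightarrow> real ^ 'd ^ 'n"
  assumes "continuous_on S G" "continuous_on S w"
  shows "continuous_on S (\<lambda>p. G p *v w p)"
  unfolding matrix_vector_mult_def by (intro continuous_on_vec_lambda continuous_intros assms)

lemma continuous_on_section:
  assumes "continuous_on UNIV (\<lambda>(x, y). h x y)"
  shows "continuous_on UNIV (h x)"
proof -
  have "continuous_on UNIV (\<lambda>y. (\<lambda>(x, y). h x y) (x, y))"
    by (rule continuous_on_compose2[OF assms]) (auto intro: continuous_intros)
  then show ?thesis by simp
qed

lemma borel_measurable_em_step:
  fixes F :: "real ^ 'n \<Rightarrow> real ^ 'n" and G :: "real ^ 'n \<Rightarrow> real ^ 'd ^ 'n"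
  assumes F: "continuous_on UNIV F" and G: "continuous_on UNIV G"
  shows "(\<lambda>(y, w). em_step F G \<Delta> y w) \<in> borel_measurable (borel \<Otimes>\<^sub>M borel)"
proof -
  have "continuous_on UNIV (\<lambda>p :: (real ^ 'n) \<times> (real ^ 'd). F (fst p))"
    and "continuous_on UNIV (\<lambda>p :: (real ^ 'n) \<times> (real ^ 'd). G (fst p))"
    by (auto intro!: continuous_on_compose2[OF F] continuous_on_compose2[OF G] continuous_intros)
  then have "continuous_on UNIV (\<lambda>p :: (real ^ 'n) \<times> (real ^ 'd). em_step F G \<Delta> (fst p) (snd p))"
    unfolding em_step_def by (intro continuous_intros)
  then show ?thesis
    unfolding borel_prod case_prod_beta by (rule borel_measurable_continuous_onI)
qed

lemma measurable_em_scheme: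
  fixes F :: "real ^ 'n \<Rightarrow> real ^ 'n" and G :: "real ^ 'n \<Rightarrow> real ^ 'd ^ 'n"
  assumes F: "continuous_on UNIV F" and G: "continuous_on UNIV G" and "m \<le> k"
  shows "(\<lambda>w. em_scheme F G \<Delta> y w m) \<in> borel_measurable (Pi\<^sub>M {..<k} (\<lambda>_. borel))"
  using \<open>m \<le> k\<close>
proof (induction m)
  case 0
  then show ?case by simp
next
  case (Suc m)
  have "(\<lambda>w. (em_scheme F G \<Delta> y w m, w m)) \<in> measurable (Pi\<^sub>M {..<k} (\<lambda>_. borel)) (borel \<Otimes>\<^sub>M borel)"
    using Suc by (intro measurable_Pair measurable_component_singleton) auto
  from measurable_compose[OF this borel_measurable_em_step[OF F G]] show ?case
    by simp
qed

lemma dissipative_step_le_exp: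
  fixes e u :: "'a::real_inner" and C :: "'b::real_normed_vector"
  assumes u: "norm u \<le> L * norm e" and dissipative: "2 * (e \<bullet> u) + (norm C)\<^sup>2 \<le> - \<beta> * (norm e)\<^sup>2"
    and \<Delta>: "0 < \<Delta>" and small: "L\<^sup>2 * \<Delta> \<le> \<beta> / 2"
  shows "(norm (e + \<Delta> *\<^sub>R u))\<^sup>2 + \<Delta> * (norm C)\<^sup>2 \<le> exp (- \<beta> * \<Delta> / 2) * (norm e)\<^sup>2"
proof -
  have u2: "(norm u)\<^sup>2 \<le> L\<^sup>2 * (norm e)\<^sup>2"
    using u by (metis norm_ge_zero power_mono power_mult_distrib)
  have "(norm (e + \<Delta> *\<^sub>R u))\<^sup>2 + \<Delta> * (norm C)\<^sup>2
      = (norm e)\<^sup>2 + \<Delta> * (2 * (e \<bullet> u) + (norm C)\<^sup>2) + \<Delta>\<^sup>2 * (norm u)\<^sup>2"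
    unfolding power2_norm_eq_inner
    by (simp add: inner_add_left inner_add_right inner_commute power2_eq_square algebra_simps)
  also have "\<dots> \<le> (norm e)\<^sup>2 + \<Delta> * (- \<beta> * (norm e)\<^sup>2) + \<Delta>\<^sup>2 * (L\<^sup>2 * (norm e)\<^sup>2)"
    using dissipative u2 \<Delta> by (intro add_mono mult_left_mono) auto
  also have "\<dots> = (1 - \<beta> * \<Delta> + (L\<^sup>2 * \<Delta>) * \<Delta>) * (norm e)\<^sup>2"
    by (simp add: algebra_simps power2_eq_square)
  also have "\<dots> \<le> (1 + (- \<beta> * \<Delta> / 2)) * (norm e)\<^sup>2"
    using mult_right_mono[OF small, of \<Delta>] \<Delta> by (intro mult_right_mono) (auto simp: algebra_simps)
  also have "\<dots> \<le> exp (- \<beta> * \<Delta> / 2) * (norm e)\<^sup>2"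
    by (intro mult_right_mono exp_ge_add_one_self) auto
  finally show ?thesis .
qed

lemma (in prob_space) nn_integral_em_step_diff_le:
  fixes X :: "'a \<Rightarrow> real ^ 'd"
    and F :: "real ^ 'n \<Rightarrow> real ^ 'n" and G :: "real ^ 'n \<Rightarrow> real ^ 'd ^ 'n"
  assumes normal: "iid_normal_vector M \<Delta> X"
    and lipschitz: "\<And>y z. norm (F y - F z) \<le> L * norm (y - z)"
    and dissipative: "\<And>y z. 2 * ((y - z) \<bullet> (F y - F z)) + (norm (G y - G z))\<^sup>2 \<le> - \<beta> * (norm (y - z))\<^sup>2"
    and \<Delta>: "0 < \<Delta>" and small: "L\<^sup>2 * \<Delta> \<le> \<beta> / 2"
  shows "(\<integral>\<^sup>+\<omega>. ennreal ((norm (em_step F G \<Delta> y (X \<omega>) - em_step F G \<Delta> z (X \<omega>)))\<^sup>2) \<partial>M)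
    \<le> ennreal (exp (- \<beta> * \<Delta> / 2) * (norm (y - z))\<^sup>2)"
proof -
  have "(\<integral>\<^sup>+\<omega>. ennreal ((norm (em_step F G \<Delta> y (X \<omega>) - em_step F G \<Delta> z (X \<omega>)))\<^sup>2) \<partial>M)
      = ennreal ((norm (y - z + \<Delta> *\<^sub>R (F y - F z)))\<^sup>2 + \<Delta> * (norm (G y - G z))\<^sup>2)"
    unfolding em_step_diff by (rule nn_integral_power2_norm_affine_iid_normal[OF normal \<Delta>])
  also have "\<dots> \<le> ennreal (exp (- \<beta> * \<Delta> / 2) * (norm (y - z))\<^sup>2)"
    by (intro ennreal_leI dissipative_step_le_exp[OF lipschitz dissipative \<Delta> small])
  finally show ?thesis .
qed

lemma (in prob_space) em_scheme_mean_square_step: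
  fixes D :: "nat \<Rightarrow> 'a \<Rightarrow> real ^ 'd"
    and F :: "real ^ 'n \<Rightarrow> real ^ 'n" and G :: "real ^ 'n \<Rightarrow> real ^ 'd ^ 'n"
  assumes ind: "indep_vars (\<lambda>_. borel) D {..<Suc m}" and normal: "iid_normal_vector M \<Delta> (D m)"
    and F: "continuous_on UNIV F" and G: "continuous_on UNIV G"
    and lipschitz: "\<And>y z. norm (F y - F z) \<le> L * norm (y - z)"
    and dissipative: "\<And>y z. 2 * ((y - z) \<bullet> (F y - F z)) + (norm (G y - G z))\<^sup>2 \<le> - \<beta> * (norm (y - z))\<^sup>2"
    and \<Delta>: "0 < \<Delta>" and small: "L\<^sup>2 * \<Delta> \<le> \<beta> / 2"
  shows "(\<integral>\<^sup>+\<omega>. ennreal ((norm (em_scheme F G \<Delta> y (\<lambda>j. D j \<omega>) (Suc m)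
              - em_scheme F G \<Delta> z (\<lambda>j. D j \<omega>) (Suc m)))\<^sup>2) \<partial>M)
    \<le> ennreal (exp (- \<beta> * \<Delta> / 2)) *
      (\<integral>\<^sup>+\<omega>. ennreal ((norm (em_scheme F G \<Delta> y (\<lambda>j. D j \<omega>) m - em_scheme F G \<Delta> z (\<lambda>j. D j \<omega>) m))\<^sup>2) \<partial>M)"
proof -
  let ?S = "Pi\<^sub>M {..<m} (\<lambda>_. borel) :: (nat \<Rightarrow> real ^ 'd) measure"
  let ?T = "Pi\<^sub>M {m} (\<lambda>_. borel) :: (nat \<Rightarrow> real ^ 'd) measure"
  \<comment> \<open>The state after \<open>m\<close> steps depends only on \<open>U\<close>, and the next increment \<open>V\<close> is independent of it.\<close>
  define U where "U \<omega> = restrict (\<lambda>j. D j \<omega>) {..<m}" for \<omega>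
  define V where "V \<omega> = restrict (\<lambda>j. D j \<omega>) {m}" for \<omega>
  have UV: "indep_var ?S U ?T V"
    unfolding U_def V_def by (rule indep_var_restrict[OF ind]) auto
  then have [measurable]: "random_variable ?S U"
    by (rule indep_var_rv1)
  define Y where "Y w = em_scheme F G \<Delta> y w m" for w
  define Z where "Z w = em_scheme F G \<Delta> z w m" for w
  have [measurable]: "Y \<in> borel_measurable ?S" "Z \<in> borel_measurable ?S"
    "(\<lambda>w. w m) \<in> borel_measurable ?T"
    "(\<lambda>(y, w). em_step F G \<Delta> y w) \<in> borel_measurable (borel \<Otimes>\<^sub>M borel)"
    unfolding Y_def Z_def
    by (auto intro: measurable_em_scheme[OF F G] measurable_component_singleton
        borel_measurable_em_step[OF F G])
  define H where "H p = ennreal ((norm (em_step F G \<Delta> (Y (fst p)) (snd p m)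
      - em_step F G \<Delta> (Z (fst p)) (snd p m)))\<^sup>2)" for p
  have H: "H \<in> borel_measurable (?S \<Otimes>\<^sub>M ?T)"
    unfolding H_def by measurable
  have "(\<integral>\<^sup>+\<omega>. ennreal ((norm (em_scheme F G \<Delta> y (\<lambda>j. D j \<omega>) (Suc m)
              - em_scheme F G \<Delta> z (\<lambda>j. D j \<omega>) (Suc m)))\<^sup>2) \<partial>M) = (\<integral>\<^sup>+\<omega>. H (U \<omega>, V \<omega>) \<partial>M)"
    by (simp add: H_def U_def V_def Y_def Z_def em_scheme_restrict)
  also have "\<dots> = (\<integral>\<^sup>+\<omega>. (\<integral>\<^sup>+\<omega>'. H (U \<omega>, V \<omega>') \<partial>M) \<partial>M)"
    by (rule nn_integral_indep_var[OF UV H])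
  also have "\<dots> \<le> (\<integral>\<^sup>+\<omega>. ennreal (exp (- \<beta> * \<Delta> / 2)) * ennreal ((norm (Y (U \<omega>) - Z (U \<omega>)))\<^sup>2) \<partial>M)"
  proof (rule nn_integral_mono)
    fix \<omega>
    have "(\<integral>\<^sup>+\<omega>'. H (U \<omega>, V \<omega>') \<partial>M) = (\<integral>\<^sup>+\<omega>'. ennreal ((norm
        (em_step F G \<Delta> (Y (U \<omega>)) (D m \<omega>') - em_step F G \<Delta> (Z (U \<omega>)) (D m \<omega>')))\<^sup>2) \<partial>M)"
      by (simp add: H_def V_def)
    also have "\<dots> \<le> ennreal (exp (- \<beta> * \<Delta> / 2) * (norm (Y (U \<omega>) - Z (U \<omega>)))\<^sup>2)"
      by (rule nn_integral_em_step_diff_le[OF normal lipschitz dissipative \<Delta> small])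
    finally show "(\<integral>\<^sup>+\<omega>'. H (U \<omega>, V \<omega>') \<partial>M)
        \<le> ennreal (exp (- \<beta> * \<Delta> / 2)) * ennreal ((norm (Y (U \<omega>) - Z (U \<omega>)))\<^sup>2)"
      by (simp add: ennreal_mult)
  qed
  also have "\<dots> = ennreal (exp (- \<beta> * \<Delta> / 2)) * (\<integral>\<^sup>+\<omega>. ennreal ((norm (Y (U \<omega>) - Z (U \<omega>)))\<^sup>2) \<partial>M)"
    by (intro nn_integral_cmult) measurable
  also have "\<dots> = ennreal (exp (- \<beta> * \<Delta> / 2)) *
      (\<integral>\<^sup>+\<omega>. ennreal ((norm (em_scheme F G \<Delta> y (\<lambda>j. D j \<omega>) m - em_scheme F G \<Delta> z (\<lambda>j. D j \<omega>) m))\<^sup>2) \<partial>M)"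
    by (simp add: U_def Y_def Z_def em_scheme_restrict)
  finally show ?thesis .
qed

lemma (in prob_space) em_scheme_mean_square_decay:
  fixes D :: "nat \<Rightarrow> 'a \<Rightarrow> real ^ 'd"
    and F :: "real ^ 'n \<Rightarrow> real ^ 'n" and G :: "real ^ 'n \<Rightarrow> real ^ 'd ^ 'n"
  assumes ind: "\<And>k. indep_vars (\<lambda>_. borel) D {..<k}" and normal: "\<And>j. iid_normal_vector M \<Delta> (D j)"
    and F: "continuous_on UNIV F" and G: "continuous_on UNIV G"
    and lipschitz: "\<And>y z. norm (F y - F z) \<le> L * norm (y - z)"
    and dissipative: "\<And>y z. 2 * ((y - z) \<bullet> (F y - F z)) + (norm (G y - G z))\<^sup>2 \<le> - \<beta> * (norm (y - z))\<^sup>2"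
    and \<Delta>: "0 < \<Delta>" and small: "L\<^sup>2 * \<Delta> \<le> \<beta> / 2"
  shows "(\<integral>\<^sup>+\<omega>. ennreal ((norm (em_scheme F G \<Delta> y (\<lambda>j. D j \<omega>) m - em_scheme F G \<Delta> z (\<lambda>j. D j \<omega>) m))\<^sup>2) \<partial>M)
    \<le> ennreal ((norm (y - z))\<^sup>2 * exp (- \<beta> * real m * \<Delta> / 2))"
proof (induction m)
  case 0
  then show ?case by (simp add: emeasure_space_1)
next
  case (Suc m)
  have "(\<integral>\<^sup>+\<omega>. ennreal ((norm (em_scheme F G \<Delta> y (\<lambda>j. D j \<omega>) (Suc m)
          - em_scheme F G \<Delta> z (\<lambda>j. D j \<omega>) (Suc m)))\<^sup>2) \<partial>M)
      \<le> ennreal (exp (- \<beta> * \<Delta> / 2)) * ennreal ((norm (y - z))\<^sup>2 * exp (- \<beta> * real m * \<Delta> / 2))"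
    using em_scheme_mean_square_step[OF ind normal F G lipschitz dissipative \<Delta> small]
      mult_left_mono[OF Suc.IH] by (meson order_trans zero_le)
  also have "\<dots> = ennreal ((norm (y - z))\<^sup>2 * exp (- \<beta> * real (Suc m) * \<Delta> / 2))"
    by (simp add: ennreal_mult[symmetric] mult_exp_exp field_simps)
  finally show ?case .
qed

lemma brownian_motion_increments:
  fixes W :: "real \<Rightarrow> 'a \<Rightarrow> real ^ 'd"
  assumes W: "brownian_motion M W" and \<Delta>: "0 < \<Delta>"
  defines "D \<equiv> \<lambda>j \<omega>. W (real (Suc j) * \<Delta>) \<omega> - W (real j * \<Delta>) \<omega>"
  shows "prob_space.indep_vars M (\<lambda>_. borel) D {..<k}" and "iid_normal_vector M \<Delta> (D j)"
proof -
  have "\<forall>(ts :: nat \<Rightarrow> real) k. 0 \<le> ts 0 \<and> (\<forall>j<k. ts j < ts (Suc j)) \<longrightarrow>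
      prob_space.indep_vars M (\<lambda>_. borel) (\<lambda>j \<omega>. W (ts (Suc j)) \<omega> - W (ts j) \<omega>) {..<k}"
    using W unfolding brownian_motion_def by blast
  from this[rule_format, of "\<lambda>j. real j * \<Delta>" k] \<Delta>
  show "prob_space.indep_vars M (\<lambda>_. borel) D {..<k}"
    unfolding D_def by simp
  have "iid_normal_vector M (real (Suc j) * \<Delta> - real j * \<Delta>) (D j)"
    using W \<Delta> unfolding brownian_motion_def D_def iid_normal_vector_def
    by (auto simp: mult_strict_right_mono)
  then show "iid_normal_vector M \<Delta> (D j)"
    by (simp add: algebra_simps)
qed

theorem lemma4p2:
  fixes f :: "real ^ 'n1 \<Rightarrow> real ^ 'n2 \<Rightarrow> real ^ 'n2"
    and g :: "real ^ 'n1 \<Rightarrow> real ^ 'n2 \<Rightarrow> real ^ 'd2 ^ 'n2"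
    and L \<beta> :: real
  assumes "continuous_on UNIV (\<lambda>(x, y). f x y)" and "continuous_on UNIV (\<lambda>(x, y). g x y)"
    and L_pos: "L > 0"
    and F1: "\<And>x1 y1 x2 y2. max (norm (f x1 y1 - f x2 y2)) (norm (g x1 y1 - g x2 y2))
               \<le> L * (norm (x1 - x2) + norm (y1 - y2))"
    and beta_pos: "\<beta> > 0"
    and F2: "\<And>x y1 y2. 2 * ((y1 - y2) \<bullet> (f x y1 - f x y2)) + (norm (g x y1 - g x y2))\<^sup>2
               \<le> - \<beta> * (norm (y1 - y2))\<^sup>2"
  shows "\<exists>\<Delta>bar. 0 < \<Delta>bar \<and> \<Delta>bar \<le> 1 \<and>
    (\<forall>(M :: 'w measure) (W :: nat \<Rightarrow> real \<Rightarrow> 'w \<Rightarrow> real ^ 'd2).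
       prob_space M \<and> (\<forall>n. brownian_motion M (W n)) \<and>
       prob_space.indep_vars M (\<lambda>_. Pi\<^sub>M UNIV (\<lambda>_::real. (borel :: (real ^ 'd2) measure)))
         (\<lambda>n \<omega>. \<lambda>t. W n t \<omega>) UNIV \<longrightarrow>
       (\<forall>\<Delta>2 x y z n m. 0 < \<Delta>2 \<and> \<Delta>2 < \<Delta>bar \<longrightarrow>
          (\<integral>\<^sup>+ \<omega>. ennreal ((norm (em_chain f g \<Delta>2 (W n) x y m \<omega> - em_chain f g \<Delta>2 (W n) x z m \<omega>))\<^sup>2) \<partial>M)
          \<le> ennreal ((norm (y - z))\<^sup>2 * exp (- \<beta> * real m * \<Delta>2 / 2))))"
proof (intro exI conjI allI impI)
  show "0 < min 1 (\<beta> / (2 * L\<^sup>2))" and "min 1 (\<beta> / (2 * L\<^sup>2)) \<le> 1"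
    using L_pos beta_pos by auto
  fix M :: "'w measure" and W :: "nat \<Rightarrow> real \<Rightarrow> 'w \<Rightarrow> real ^ 'd2" and \<Delta> x y z n m
  assume "prob_space M \<and> (\<forall>n. brownian_motion M (W n)) \<and>
       prob_space.indep_vars M (\<lambda>_. Pi\<^sub>M UNIV (\<lambda>_::real. (borel :: (real ^ 'd2) measure)))
         (\<lambda>n \<omega>. \<lambda>t. W n t \<omega>) UNIV"
  \<comment> \<open>Both chains use the single path \<open>W n\<close>.\<close>
  then have "prob_space M" and W: "brownian_motion M (W n)"
    by simp_all
  interpret prob_space M by fact
  assume "0 < \<Delta> \<and> \<Delta> < min 1 (\<beta> / (2 * L\<^sup>2))"
  then have \<Delta>: "0 < \<Delta>" and small: "L\<^sup>2 * \<Delta> \<le> \<beta> / 2"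
    using L_pos by (auto simp: field_simps)
  have lipschitz: "norm (f x y1 - f x y2) \<le> L * norm (y1 - y2)" for y1 y2
    using F1[of x y1 x y2] by simp
  show "(\<integral>\<^sup>+ \<omega>. ennreal ((norm (em_chain f g \<Delta> (W n) x y m \<omega> - em_chain f g \<Delta> (W n) x z m \<omega>))\<^sup>2) \<partial>M)
      \<le> ennreal ((norm (y - z))\<^sup>2 * exp (- \<beta> * real m * \<Delta> / 2))"
    unfolding em_chain_eq_em_scheme
    by (rule em_scheme_mean_square_decay[OF brownian_motion_increments[OF W \<Delta>]
          continuous_on_section[OF assms(1)] continuous_on_section[OF assms(2)] lipschitz F2 \<Delta> small])
qed

end
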